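(* Fix $h_1,\dots,h_K\in\mathbb{C}\setminus\{0\}$, $P_W,P_X,N_0>0$, $\rho_X=P_X/N_0$, $\epsilon>0$, $\eta>0$ and $\delta\in(0,1)$. Suppose the source message length $L$ satisfies $$L\ge\frac{\ln(1/\delta)}{\eta-\ln(1+\eta)},$$ and the coding rate $R=L/\tilde L$ satisfies $$0<R\le\min\left\{1,\ \frac{\epsilon\,\rho_X\min_k|h_k|^2}{(1+\eta)P_W}\right\}.$$ Then under the optimal coding scheme (admissible encoding matrix with $\boldsymbol{\Phi}^{\mathsf H}\boldsymbol{\Phi}=\mathbf{I}_L$ and power scaling $P=P^*=\frac{P_X\min_k|h_k|^2}{RP_W}$), one has $\epsilon\ge(1+\eta)\gamma_{\mathrm{opt}}$ with $\gamma_{\mathrm{opt}}=\frac{RP_W}{\rho_X\min_k|h_k|^2}$, and $$\Pr\big(d(\mathbf{w},\hat{\mathbf{w}})\le\epsilon\big)\ge1-\delta.$$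
   Context: System model (channel-coded over-the-air computation). There are $K$ users; user $k$ holds a random source message $\mathbf{w}_k\in\mathbb{C}^L$, with $\mathbf{w}_1,\dots,\mathbf{w}_K$ independent and $\mathbf{w}_k\sim\mathcal{CN}(\mathbf{0},P_W\mathbf{I}_L)$; $\mathbf{w}=\sum_k\mathbf{w}_k$. An admissible encoding matrix is $\boldsymbol{\Phi}\in\mathbb{C}^{\tilde L\times L}$, $\tilde L\ge L$, with $\mathrm{tr}(\boldsymbol{\Phi}^{\mathsf H}\boldsymbol{\Phi})=L$ and such that every $L\times L$ submatrix formed by $L$ rows of $\boldsymbol{\Phi}$ has rank $L$. Coding rate $R=L/\tilde L$. User $k$ transmits $\mathbf{x}_k=\frac{\sqrt{P}}{h_k}\boldsymbol{\Phi}\mathbf{w}_k$; the base station receives $\mathbf{y}=\sqrt{P}\boldsymbol{\Phi}\mathbf{w}+\mathbf{n}$ with $\mathbf{n}\sim\mathcal{CN}(\mathbf{0},N_0\mathbf{I}_{\tilde L})$ independent of the messages, and estimates $\hat{\mathbf{w}}=\boldsymbol{\Phi}^{\dagger}\mathbf{y}/\sqrt{P}$. The power constraint is $\frac{LPP_W}{\tilde L|h_k|^2}\le P_X$ for all $k$. Distortion $d(\mathbf{w},\hat{\mathbf{w}})=\frac1L\|\hat{\mathbf{w}}-\mathbf{w}\|^2$. *)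

theory Defs
  imports "HOL-Probability.Probability"
    "Jordan_Normal_Form.Schur_Decomposition"
    "Jordan_Normal_Form.DL_Rank"
    "Jordan_Normal_Form.DL_Submatrix"
begin

definition pseudo_inverse :: "complex mat \<Rightarrow> complex mat" where
  "pseudo_inverse A = (THE X. X \<in> carrier_mat (dim_col A) (dim_row A)
      \<and> A * X * A = A \<and> X * A * X = X
      \<and> mat_adjoint (A * X) = A * X \<and> mat_adjoint (X * A) = X * A)"

definition admissible_enc :: "complex mat \<Rightarrow> nat \<Rightarrow> nat \<Rightarrow> bool" where
  "admissible_enc Phi L Lt \<longleftrightarrow> Phi \<in> carrier_mat Lt L \<and> L \<le> Lt
     \<and> (\<Sum>i<L. (mat_adjoint Phi * Phi) $$ (i, i)) = of_nat L
     \<and> (\<forall>S. S \<subseteq> {..<Lt} \<and> card S = L \<longrightarrow>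
            vec_space.rank L (submatrix Phi S {..<L} :: complex mat) = L)"

(* A family X i (i \<in> I) of complex random variables that are jointly independent
   circularly-symmetric complex Gaussians, X i ~ CN(0, v i): the real and imaginary
   parts of all X i are mutually independent, each N(0, v i / 2). *)
definition indep_CN_family ::
  "'a measure \<Rightarrow> ('i \<Rightarrow> 'a \<Rightarrow> complex) \<Rightarrow> 'i set \<Rightarrow> ('i \<Rightarrow> real) \<Rightarrow> bool" where
  "indep_CN_family M X I v \<longleftrightarrow>
     prob_space.indep_vars M (\<lambda>_. borel)
        (\<lambda>(i, b) \<omega>. if b then Re (X i \<omega>) else Im (X i \<omega>)) (I \<times> UNIV)
     \<and> (\<forall>i\<in>I. distributed M lborel (\<lambda>\<omega>. Re (X i \<omega>)) (normal_density 0 (sqrt (v i / 2)))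
              \<and> distributed M lborel (\<lambda>\<omega>. Im (X i \<omega>)) (normal_density 0 (sqrt (v i / 2))))"

definition distortion :: "nat \<Rightarrow> complex vec \<Rightarrow> complex vec \<Rightarrow> real" where
  "distortion L w what = (1 / real L) * (\<Sum>j<L. (cmod (what $ j - w $ j))\<^sup>2)"

end

theory Submission
  imports Defs
begin

(* With Phi^H Phi = I the pseudo-inverse of Phi is Phi^H, so the estimation error is
   Phi^H n / sqrt P and the distortion is |Phi^H n|^2 / (L P), whatever the messages are.
   Since the columns of Phi are orthonormal, 2 |Phi^H n|^2 / N0 is chi-square with 2 L degrees
   of freedom, and the Chernoff bound with its moment generating function gives
   Pr (|Phi^H n|^2 >= (1 + eta) L N0) <= exp (- L (eta - ln (1 + eta))) <= delta.
   The rate bound is exactly (1 + eta) N0 <= eps P*, so outside this event the distortion is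
   at most eps. *)

section \<open>Gaussian moment generating functions\<close>

lemma nn_integral_normal_density:
  assumes "\<sigma> > 0"
  shows "(\<integral>\<^sup>+x. ennreal (normal_density \<mu> \<sigma> x) \<partial>lborel) = 1"
  using assms by (subst nn_integral_eq_integral) auto

lemma nn_integral_normal_density_exp_linear:
  assumes \<sigma>: "\<sigma> > 0"
  shows "(\<integral>\<^sup>+x. ennreal (normal_density 0 \<sigma> x * exp (c * x)) \<partial>lborel)
           = ennreal (exp (c\<^sup>2 * \<sigma>\<^sup>2 / 2))"
proof -
  have shift: "normal_density 0 \<sigma> x * exp (c * x)
                 = exp (c\<^sup>2 * \<sigma>\<^sup>2 / 2) * normal_density (c * \<sigma>\<^sup>2) \<sigma> x" for x
  proof -
    have "- x\<^sup>2 / (2 * \<sigma>\<^sup>2) + c * x = c\<^sup>2 * \<sigma>\<^sup>2 / 2 + (- (x - c * \<sigma>\<^sup>2)\<^sup>2 / (2 * \<sigma>\<^sup>2))"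
      using \<sigma> by (simp add: field_simps power2_eq_square)
    then show ?thesis
      unfolding normal_density_def by (simp add: exp_add[symmetric] mult_exp_exp)
  qed
  show ?thesis
    using nn_integral_normal_density[OF \<sigma>, of "c * \<sigma>\<^sup>2"]
    by (simp add: shift ennreal_mult' nn_integral_cmult)
qed

lemma nn_integral_normal_density_exp_square:
  assumes a: "a < 1/2"
  shows "(\<integral>\<^sup>+x. ennreal (normal_density 0 1 x * exp (a * x\<^sup>2)) \<partial>lborel)
           = ennreal (1 / sqrt (1 - 2 * a))"
proof -
  define \<sigma> where "\<sigma> = 1 / sqrt (1 - 2 * a)"
  have \<sigma>: "\<sigma> > 0" and \<sigma>2: "\<sigma>\<^sup>2 = 1 / (1 - 2 * a)"
    using a by (simp_all add: \<sigma>_def power_divide)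
  have rescale: "normal_density 0 1 x * exp (a * x\<^sup>2) = \<sigma> * normal_density 0 \<sigma> x" for x
  proof -
    have "- x\<^sup>2 / 2 + a * x\<^sup>2 = - x\<^sup>2 / (2 * \<sigma>\<^sup>2)"
      using a unfolding \<sigma>2 by (simp add: field_simps)
    moreover have "\<sigma> * (1 / sqrt (2 * pi * \<sigma>\<^sup>2)) = 1 / sqrt (2 * pi)"
      using \<sigma> by (simp add: real_sqrt_mult)
    ultimately have "normal_density 0 1 x * exp (a * x\<^sup>2)
        = (\<sigma> * (1 / sqrt (2 * pi * \<sigma>\<^sup>2))) * exp (- x\<^sup>2 / (2 * \<sigma>\<^sup>2))"
      unfolding normal_density_def by (simp add: mult_exp_exp[symmetric] exp_add[symmetric] ac_simps)
    then show ?thesis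
      unfolding normal_density_def by simp
  qed
  have "(\<integral>\<^sup>+x. ennreal (normal_density 0 1 x * exp (a * x\<^sup>2)) \<partial>lborel)
          = ennreal \<sigma> * (\<integral>\<^sup>+x. ennreal (normal_density 0 \<sigma> x) \<partial>lborel)"
    using \<sigma> by (simp add: rescale ennreal_mult' nn_integral_cmult)
  then show ?thesis
    using nn_integral_normal_density[OF \<sigma>] by (simp add: \<sigma>_def)
qed

lemma sum_square_orthonormal_combination:
  fixes u :: "'k \<Rightarrow> 'i \<Rightarrow> real"
  assumes "finite J"
    and orthonormal: "\<And>k l. k \<in> J \<Longrightarrow> l \<in> J \<Longrightarrow> (\<Sum>i\<in>I. u k i * u l i) = (if k = l then 1 else 0)"
  shows "(\<Sum>i\<in>I. (\<Sum>k\<in>J. g k * u k i)\<^sup>2) = (\<Sum>k\<in>J. (g k)\<^sup>2)"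
proof -
  have "(\<Sum>i\<in>I. (\<Sum>k\<in>J. g k * u k i)\<^sup>2) = (\<Sum>i\<in>I. \<Sum>k\<in>J. \<Sum>l\<in>J. g k * g l * (u k i * u l i))"
    by (simp add: power2_eq_square sum_product algebra_simps)
  also have "\<dots> = (\<Sum>k\<in>J. \<Sum>l\<in>J. g k * g l * (\<Sum>i\<in>I. u k i * u l i))"
    by (simp add: sum.swap[of _ I] sum_distrib_left)
  also have "\<dots> = (\<Sum>k\<in>J. \<Sum>l\<in>J. g k * g l * (if k = l then 1 else 0))"
    using orthonormal by (intro sum.cong refl) auto
  also have "\<dots> = (\<Sum>k\<in>J. (g k)\<^sup>2)"
    using \<open>finite J\<close> by (simp add: power2_eq_square if_distrib cong: if_cong)
  finally show ?thesis .
qed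

context prob_space
begin

lemma indep_normal_mgf_linear:
  fixes X :: "'i \<Rightarrow> 'a \<Rightarrow> real"
  assumes "finite I" and indep: "indep_vars (\<lambda>_. borel) X I"
    and normal: "\<And>i. i \<in> I \<Longrightarrow> distributed M lborel (X i) (normal_density 0 \<sigma>)"
    and \<sigma>: "\<sigma> > 0"
  shows "(\<integral>\<^sup>+\<omega>. ennreal (exp (\<Sum>i\<in>I. c i * X i \<omega>)) \<partial>M)
           = ennreal (exp (\<sigma>\<^sup>2 / 2 * (\<Sum>i\<in>I. (c i)\<^sup>2)))"
proof -
  have "(\<integral>\<^sup>+\<omega>. ennreal (exp (\<Sum>i\<in>I. c i * X i \<omega>)) \<partial>M)
          = (\<integral>\<^sup>+\<omega>. (\<Prod>i\<in>I. ennreal (exp (c i * X i \<omega>))) \<partial>M)"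
    using \<open>finite I\<close> by (simp add: exp_sum prod_ennreal)
  also have "\<dots> = (\<Prod>i\<in>I. \<integral>\<^sup>+\<omega>. ennreal (exp (c i * X i \<omega>)) \<partial>M)"
    by (intro indep_vars_nn_integral \<open>finite I\<close> indep_vars_compose2[OF indep]) auto
  also have "\<dots> = (\<Prod>i\<in>I. ennreal (exp ((c i)\<^sup>2 * \<sigma>\<^sup>2 / 2)))"
  proof (rule prod.cong[OF refl])
    fix i assume "i \<in> I"
    have "(\<integral>\<^sup>+\<omega>. ennreal (exp (c i * X i \<omega>)) \<partial>M)
            = (\<integral>\<^sup>+x. ennreal (normal_density 0 \<sigma> x) * ennreal (exp (c i * x)) \<partial>lborel)"
      by (rule distributed_nn_integral[symmetric]) (use normal \<open>i \<in> I\<close> in auto)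
    also have "\<dots> = ennreal (exp ((c i)\<^sup>2 * \<sigma>\<^sup>2 / 2))"
      using nn_integral_normal_density_exp_linear[OF \<sigma>] by (simp add: ennreal_mult)
    finally show "(\<integral>\<^sup>+\<omega>. ennreal (exp (c i * X i \<omega>)) \<partial>M) = ennreal (exp ((c i)\<^sup>2 * \<sigma>\<^sup>2 / 2))" .
  qed
  also have "\<dots> = ennreal (exp (\<sigma>\<^sup>2 / 2 * (\<Sum>i\<in>I. (c i)\<^sup>2)))"
    using \<open>finite I\<close>
    by (simp add: prod_ennreal exp_sum[symmetric] sum_distrib_left sum_divide_distrib algebra_simps)
  finally show ?thesis .
qed

(* Hubbard-Stratonovich: exp (\<theta> v^2) is the expectation of exp (sqrt (2 \<theta>) v g) for a standard
   normal g.  Linearising every square this way and exchanging the integrals (Fubini) reduces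
   the claim to the linear case, and orthonormality of u turns the new exponent back into
   a sum of squares of the g's. *)
lemma indep_normal_mgf_projection_norm:
  fixes X :: "'i \<Rightarrow> 'a \<Rightarrow> real" and u :: "'k \<Rightarrow> 'i \<Rightarrow> real"
  assumes fin: "finite I" "finite J" and indep: "indep_vars (\<lambda>_. borel) X I"
    and normal: "\<And>i. i \<in> I \<Longrightarrow> distributed M lborel (X i) (normal_density 0 \<sigma>)"
    and \<sigma>: "\<sigma> > 0"
    and orthonormal: "\<And>k l. k \<in> J \<Longrightarrow> l \<in> J \<Longrightarrow> (\<Sum>i\<in>I. u k i * u l i) = (if k = l then 1 else 0)"
    and \<theta>: "0 \<le> \<theta>" "2 * \<theta> * \<sigma>\<^sup>2 < 1"
  shows "(\<integral>\<^sup>+\<omega>. ennreal (exp (\<theta> * (\<Sum>k\<in>J. (\<Sum>i\<in>I. u k i * X i \<omega>)\<^sup>2))) \<partial>M)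
           = ennreal ((1 / sqrt (1 - 2 * \<theta> * \<sigma>\<^sup>2)) ^ card J)"
proof -
  interpret product_sigma_finite "\<lambda>_::'k. lborel :: real measure"
    by unfold_locales
  define G where "G = PiM J (\<lambda>_::'k. lborel :: real measure)"
  interpret G: finite_product_sigma_finite "\<lambda>_::'k. lborel :: real measure" J
    by unfold_locales (rule fin)
  interpret pair_sigma_finite M G
    unfolding G_def by (intro pair_sigma_finite.intro sigma_finite_measure_axioms G.sigma_finite_measure_axioms)
  define t where "t = sqrt (2 * \<theta>)"
  have t2: "t\<^sup>2 = 2 * \<theta>" using \<theta> by (simp add: t_def)
  have [measurable]: "X i \<in> borel_measurable M" if "i \<in> I" for i
    using distributed_measurable[OF normal[OF that]] by simp
  define v where "v \<omega> k = (\<Sum>i\<in>I. u k i * X i \<omega>)" for \<omega> k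
  have [measurable]: "(\<lambda>\<omega>. v \<omega> k) \<in> borel_measurable M" for k
    unfolding v_def by measurable
  define F where "F \<omega> g = (\<Prod>k\<in>J. ennreal (normal_density 0 1 (g k) * exp (t * v \<omega> k * g k)))" for \<omega> g
  have linearise: "ennreal (exp (\<theta> * (\<Sum>k\<in>J. (v \<omega> k)\<^sup>2))) = (\<integral>\<^sup>+g. F \<omega> g \<partial>G)" for \<omega>
  proof -
    have "(\<integral>\<^sup>+g. F \<omega> g \<partial>G)
            = (\<Prod>k\<in>J. \<integral>\<^sup>+x. ennreal (normal_density 0 1 x * exp ((t * v \<omega> k) * x)) \<partial>lborel)"
      unfolding F_def G_def by (rule product_nn_integral_prod[OF fin(2)]) simp
    also have "\<dots> = (\<Prod>k\<in>J. ennreal (exp ((t * v \<omega> k)\<^sup>2 * 1\<^sup>2 / 2)))"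
      by (intro prod.cong refl nn_integral_normal_density_exp_linear) simp
    also have "\<dots> = ennreal (exp (\<theta> * (\<Sum>k\<in>J. (v \<omega> k)\<^sup>2)))"
      using fin t2 by (simp add: prod_ennreal exp_sum[symmetric] sum_distrib_left power_mult_distrib)
    finally show ?thesis by simp
  qed
  have inner: "(\<integral>\<^sup>+\<omega>. F \<omega> g \<partial>M)
                 = (\<Prod>k\<in>J. ennreal (normal_density 0 1 (g k) * exp ((\<theta> * \<sigma>\<^sup>2) * (g k)\<^sup>2)))" for g
  proof -
    define w where "w i = t * (\<Sum>k\<in>J. g k * u k i)" for i
    have "(\<Sum>k\<in>J. t * v \<omega> k * g k) = (\<Sum>i\<in>I. w i * X i \<omega>)" for \<omega>
      unfolding v_def w_def
      by (simp add: sum_distrib_left sum_distrib_right algebra_simps sum.swap[of _ J I])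
    then have "F \<omega> g = ennreal (\<Prod>k\<in>J. normal_density 0 1 (g k)) * ennreal (exp (\<Sum>i\<in>I. w i * X i \<omega>))" for \<omega>
      unfolding F_def using fin
      by (simp add: prod_ennreal ennreal_mult[symmetric] prod.distrib exp_sum[symmetric] prod_nonneg)
    then have "(\<integral>\<^sup>+\<omega>. F \<omega> g \<partial>M)
        = ennreal (\<Prod>k\<in>J. normal_density 0 1 (g k)) * (\<integral>\<^sup>+\<omega>. ennreal (exp (\<Sum>i\<in>I. w i * X i \<omega>)) \<partial>M)"
      by (simp add: nn_integral_cmult)
    also have "\<dots> = ennreal (\<Prod>k\<in>J. normal_density 0 1 (g k)) * ennreal (exp (\<sigma>\<^sup>2 / 2 * (\<Sum>i\<in>I. (w i)\<^sup>2)))"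
      by (simp add: indep_normal_mgf_linear[OF fin(1) indep normal \<sigma>])
    also have "(\<Sum>i\<in>I. (w i)\<^sup>2) = t\<^sup>2 * (\<Sum>k\<in>J. (g k)\<^sup>2)"
      unfolding w_def power_mult_distrib sum_distrib_left[symmetric]
      using sum_square_orthonormal_combination[OF fin(2) orthonormal] by simp
    finally show ?thesis
      using fin t2 by (simp add: prod_ennreal ennreal_mult[symmetric] prod.distrib exp_sum prod_nonneg
          sum_distrib_left algebra_simps)
  qed
  have "(\<integral>\<^sup>+\<omega>. ennreal (exp (\<theta> * (\<Sum>k\<in>J. (\<Sum>i\<in>I. u k i * X i \<omega>)\<^sup>2))) \<partial>M)
          = (\<integral>\<^sup>+\<omega>. (\<integral>\<^sup>+g. F \<omega> g \<partial>G) \<partial>M)"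
    using linearise unfolding v_def by simp
  also have "\<dots> = (\<integral>\<^sup>+g. (\<integral>\<^sup>+\<omega>. F \<omega> g \<partial>M) \<partial>G)"
  proof (rule Fubini'[symmetric])
    show "case_prod F \<in> borel_measurable (M \<Otimes>\<^sub>M G)"
      unfolding F_def G_def by measurable
  qed
  also have "\<dots> = (\<Prod>k\<in>J. \<integral>\<^sup>+x. ennreal (normal_density 0 1 x * exp ((\<theta> * \<sigma>\<^sup>2) * x\<^sup>2)) \<partial>lborel)"
    unfolding inner G_def by (rule product_nn_integral_prod[OF fin(2)]) simp
  also have "\<dots> = (\<Prod>k\<in>J. ennreal (1 / sqrt (1 - 2 * (\<theta> * \<sigma>\<^sup>2))))"
    using \<theta> by (intro prod.cong refl nn_integral_normal_density_exp_square) simp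
  also have "\<dots> = ennreal ((1 / sqrt (1 - 2 * \<theta> * \<sigma>\<^sup>2)) ^ card J)"
  proof -
    have "0 \<le> 1 / sqrt (1 - 2 * \<theta> * \<sigma>\<^sup>2)" using \<theta> by simp
    then show ?thesis by (simp add: mult.assoc ennreal_power)
  qed
  finally show ?thesis .
qed

lemma indep_normal_projection_norm_tail:
  fixes X :: "'i \<Rightarrow> 'a \<Rightarrow> real" and u :: "'k \<Rightarrow> 'i \<Rightarrow> real" and \<sigma> \<eta> :: real
  assumes fin: "finite I" "finite J" and indep: "indep_vars (\<lambda>_. borel) X I"
    and normal: "\<And>i. i \<in> I \<Longrightarrow> distributed M lborel (X i) (normal_density 0 \<sigma>)"
    and \<sigma>: "\<sigma> > 0"
    and orthonormal: "\<And>k l. k \<in> J \<Longrightarrow> l \<in> J \<Longrightarrow> (\<Sum>i\<in>I. u k i * u l i) = (if k = l then 1 else 0)"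
    and \<eta>: "\<eta> > 0"
  shows "prob {\<omega> \<in> space M. (1 + \<eta>) * real (card J) * \<sigma>\<^sup>2 \<le> (\<Sum>k\<in>J. (\<Sum>i\<in>I. u k i * X i \<omega>)\<^sup>2)}
           \<le> exp (- (real (card J) / 2 * (\<eta> - ln (1 + \<eta>))))"
proof -
  define n where "n = card J"
  define q where "q = (1 + \<eta>) * \<sigma>\<^sup>2"
  define a where "a = n * q"
  define \<theta> where "\<theta> = \<eta> / (2 * q)" \<comment> \<open>the optimal Chernoff parameter\<close>
  have q: "q > 0" using \<sigma> \<eta> by (simp add: q_def)
  have \<theta>: "\<theta> > 0" "\<theta> * a = \<eta> * n / 2"
    using q \<eta> by (simp_all add: \<theta>_def a_def)
  have "2 * \<theta> * \<sigma>\<^sup>2 = \<eta> * \<sigma>\<^sup>2 / ((1 + \<eta>) * \<sigma>\<^sup>2)"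
    by (simp add: \<theta>_def q_def)
  also have "\<dots> = \<eta> / (1 + \<eta>)"
    using \<sigma> by simp
  finally have \<theta>\<sigma>_eq: "2 * \<theta> * \<sigma>\<^sup>2 = \<eta> / (1 + \<eta>)" .
  have \<theta>\<sigma>: "1 - 2 * \<theta> * \<sigma>\<^sup>2 = 1 / (1 + \<eta>)" "2 * \<theta> * \<sigma>\<^sup>2 < 1"
    using \<eta> unfolding \<theta>\<sigma>_eq by (simp_all add: field_simps)
  define S where "S \<omega> = (\<Sum>k\<in>J. (\<Sum>i\<in>I. u k i * X i \<omega>)\<^sup>2)" for \<omega>
  have [measurable]: "X i \<in> borel_measurable M" if "i \<in> I" for i
    using distributed_measurable[OF normal[OF that]] by simp
  have [measurable]: "S \<in> borel_measurable M"
    unfolding S_def by measurable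
  have "emeasure M {\<omega> \<in> space M. S \<omega> \<ge> a}
          \<le> ennreal (exp (- \<theta> * a)) * (\<integral>\<^sup>+\<omega>. ennreal (exp (\<theta> * S \<omega>)) * indicator (space M) \<omega> \<partial>M)"
    using \<theta> by (intro Chernoff_ineq_nn_integral_ge) auto
  also have "(\<integral>\<^sup>+\<omega>. ennreal (exp (\<theta> * S \<omega>)) * indicator (space M) \<omega> \<partial>M) = (\<integral>\<^sup>+\<omega>. ennreal (exp (\<theta> * S \<omega>)) \<partial>M)"
    by (intro nn_integral_cong) auto
  also have "\<dots> = ennreal ((1 / sqrt (1 - 2 * \<theta> * \<sigma>\<^sup>2)) ^ n)"
    unfolding S_def n_def using \<theta>(1) \<theta>\<sigma>(2)
    by (intro indep_normal_mgf_projection_norm fin indep normal \<sigma> orthonormal) auto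
  also have "(1 / sqrt (1 - 2 * \<theta> * \<sigma>\<^sup>2)) ^ n = exp (n * (ln (1 + \<eta>) / 2))"
    using \<eta> by (simp add: \<theta>\<sigma>(1) real_sqrt_divide exp_of_nat_mult ln_sqrt[symmetric])
  also have "ennreal (exp (- \<theta> * a)) * ennreal (exp (n * (ln (1 + \<eta>) / 2)))
               = ennreal (exp (- (n / 2 * (\<eta> - ln (1 + \<eta>)))))"
    by (simp add: \<theta>(2) ennreal_mult[symmetric] mult_exp_exp field_simps)
  finally show ?thesis
    by (simp add: S_def a_def q_def n_def emeasure_eq_measure ac_simps)
qed

end

section \<open>Circularly-symmetric complex Gaussian vectors\<close>

definition re_im_coords :: "('i \<Rightarrow> complex) \<Rightarrow> 'i \<times> bool \<Rightarrow> real" where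
  "re_im_coords z = (\<lambda>(i, b). if b then Re (z i) else Im (z i))"

lemma Re_sum_cnj_mult_eq_sum_re_im_coords:
  "Re (\<Sum>i\<in>I. cnj (a i) * b i) = (\<Sum>x\<in>I \<times> UNIV. re_im_coords a x * re_im_coords b x)"
  by (simp add: sum.cartesian_product' UNIV_bool re_im_coords_def Re_sum)

lemma Im_sum_cnj_mult_eq_sum_re_im_coords:
  "Im (\<Sum>i\<in>I. cnj (a i) * b i) = (\<Sum>x\<in>I \<times> UNIV. re_im_coords (\<lambda>i. \<i> * a i) x * re_im_coords b x)"
  by (simp add: sum.cartesian_product' UNIV_bool re_im_coords_def Im_sum algebra_simps)

lemma indep_CN_family_measurable:
  assumes "indep_CN_family M X I v" "i \<in> I"
  shows "X i \<in> borel_measurable M"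
proof -
  have "(\<lambda>\<omega>. Re (X i \<omega>)) \<in> borel_measurable M" "(\<lambda>\<omega>. Im (X i \<omega>)) \<in> borel_measurable M"
    using assms unfolding indep_CN_family_def by (auto dest!: distributed_measurable)
  then show ?thesis
    by (simp add: borel_measurable_complex_iff)
qed

context prob_space
begin

lemma indep_CN_family_subset:
  assumes "indep_CN_family M X I v" "J \<subseteq> I" "\<And>i. i \<in> J \<Longrightarrow> v' i = v i"
  shows "indep_CN_family M X J v'"
  using assms unfolding indep_CN_family_def by (auto intro: indep_vars_subset)

(* The real and imaginary parts of the projection onto \<phi>_j are the projections of the real
   coordinates of Z onto re_im_coords \<phi>_j and re_im_coords (\<i> \<phi>_j); these 2 |J| real vectors
   are again orthonormal, so the real chi-square bound applies. *)
lemma indep_CN_projection_norm_tail: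
  fixes Z :: "'i \<Rightarrow> 'a \<Rightarrow> complex" and \<phi> :: "'j \<Rightarrow> 'i \<Rightarrow> complex" and v \<eta> :: real
  assumes gauss: "indep_CN_family M Z I (\<lambda>_. v)" and v: "v > 0" and fin: "finite I" "finite J"
    and orthonormal: "\<And>j l. j \<in> J \<Longrightarrow> l \<in> J \<Longrightarrow> (\<Sum>i\<in>I. cnj (\<phi> j i) * \<phi> l i) = (if j = l then 1 else 0)"
    and \<eta>: "\<eta> > 0"
  shows "prob {\<omega> \<in> space M. (1 + \<eta>) * real (card J) * v \<le> (\<Sum>j\<in>J. (cmod (\<Sum>i\<in>I. cnj (\<phi> j i) * Z i \<omega>))\<^sup>2)}
           \<le> exp (- (real (card J) * (\<eta> - ln (1 + \<eta>))))"
proof -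
  define X where "X x \<omega> = re_im_coords (\<lambda>i. Z i \<omega>) x" for x \<omega>
  define c :: "bool \<Rightarrow> complex" where "c b = (if b then 1 else \<i>)" for b
  define u where "u = (\<lambda>(j, b). re_im_coords (\<lambda>i. c b * \<phi> j i))"
  have "X = (\<lambda>(i, b) \<omega>. if b then Re (Z i \<omega>) else Im (Z i \<omega>))"
    by (auto simp: fun_eq_iff X_def re_im_coords_def)
  then have indep: "indep_vars (\<lambda>_. borel) X (I \<times> UNIV)"
    using gauss unfolding indep_CN_family_def by simp
  have normal: "distributed M lborel (X x) (normal_density 0 (sqrt (v / 2)))" if "x \<in> I \<times> UNIV" for x
    using gauss that unfolding indep_CN_family_def X_def re_im_coords_def
    by (cases x; cases "snd x") auto
  have orthonormal_u: "(\<Sum>x\<in>I \<times> UNIV. u k x * u l x) = (if k = l then 1 else 0)"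
    if kl: "k \<in> J \<times> UNIV" "l \<in> J \<times> UNIV" for k l
  proof -
    obtain j b j' b' where k: "k = (j, b)" "j \<in> J" and l: "l = (j', b')" "j' \<in> J"
      using kl by blast
    have "(\<Sum>x\<in>I \<times> UNIV. u k x * u l x) = Re (\<Sum>i\<in>I. cnj (c b * \<phi> j i) * (c b' * \<phi> j' i))"
      unfolding k l u_def Re_sum_cnj_mult_eq_sum_re_im_coords by simp
    also have "\<dots> = Re (cnj (c b) * c b' * (\<Sum>i\<in>I. cnj (\<phi> j i) * \<phi> j' i))"
      by (rule arg_cong[where f = Re]) (simp add: sum_distrib_left mult_ac)
    also have "\<dots> = (if k = l then 1 else 0)"
      using orthonormal[OF k(2) l(2)] by (cases b; cases b') (auto simp: k l c_def)
    finally show ?thesis .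
  qed
  have re: "Re (\<Sum>i\<in>I. cnj (\<phi> j i) * Z i \<omega>) = (\<Sum>x\<in>I \<times> UNIV. u (j, True) x * X x \<omega>)" for j \<omega>
    using Re_sum_cnj_mult_eq_sum_re_im_coords[of "\<phi> j" "\<lambda>i. Z i \<omega>" I] by (simp add: u_def c_def X_def)
  have im: "Im (\<Sum>i\<in>I. cnj (\<phi> j i) * Z i \<omega>) = (\<Sum>x\<in>I \<times> UNIV. u (j, False) x * X x \<omega>)" for j \<omega>
    using Im_sum_cnj_mult_eq_sum_re_im_coords[of "\<phi> j" "\<lambda>i. Z i \<omega>" I] by (simp add: u_def c_def X_def)
  have norm_eq: "(\<Sum>j\<in>J. (cmod (\<Sum>i\<in>I. cnj (\<phi> j i) * Z i \<omega>))\<^sup>2)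
                   = (\<Sum>k\<in>J \<times> UNIV. (\<Sum>x\<in>I \<times> UNIV. u k x * X x \<omega>)\<^sup>2)" for \<omega>
    unfolding cmod_power2 re im by (simp add: sum.cartesian_product' UNIV_bool add.commute)
  have "prob {\<omega> \<in> space M. (1 + \<eta>) * real (card (J \<times> (UNIV :: bool set))) * (sqrt (v / 2))\<^sup>2
                 \<le> (\<Sum>k\<in>J \<times> UNIV. (\<Sum>x\<in>I \<times> UNIV. u k x * X x \<omega>)\<^sup>2)}
          \<le> exp (- (real (card (J \<times> (UNIV :: bool set))) / 2 * (\<eta> - ln (1 + \<eta>))))"
    using fin v \<eta> orthonormal_u
    by (intro indep_normal_projection_norm_tail indep normal) auto
  then show ?thesis
    using v by (simp add: norm_eq card_cartesian_product mult.assoc)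
qed

end

section \<open>Isometric encoding\<close>

lemma mat_adjoint_dim [simp]:
  "dim_row (mat_adjoint A) = dim_col A" "dim_col (mat_adjoint A) = dim_row A"
  unfolding mat_adjoint_def by auto

lemma mat_adjoint_carrier: "A \<in> carrier_mat n m \<Longrightarrow> mat_adjoint A \<in> carrier_mat m n"
  by auto

lemma mat_adjoint_index:
  "i < dim_col A \<Longrightarrow> j < dim_row A \<Longrightarrow> mat_adjoint A $$ (i, j) = conjugate (A $$ (j, i))"
  unfolding mat_adjoint_def by (simp add: mat_of_rows_index)

lemma mat_adjoint_adjoint [simp]: "mat_adjoint (mat_adjoint A) = A"
  by (rule eq_matI) (auto simp: mat_adjoint_index)

lemma mat_adjoint_one [simp]: "mat_adjoint (1\<^sub>m n :: complex mat) = 1\<^sub>m n"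
  by (rule eq_matI) (auto simp: mat_adjoint_index)

lemma mat_adjoint_mult:
  fixes A B :: "'a :: conjugatable_field mat"
  assumes A: "A \<in> carrier_mat n m" and B: "B \<in> carrier_mat m p"
  shows "mat_adjoint (A * B) = mat_adjoint B * mat_adjoint A"
proof (rule eq_matI)
  fix i j assume "i < dim_row (mat_adjoint B * mat_adjoint A)" "j < dim_col (mat_adjoint B * mat_adjoint A)"
  then have "i < p" "j < n" using A B by auto
  then show "mat_adjoint (A * B) $$ (i, j) = (mat_adjoint B * mat_adjoint A) $$ (i, j)"
    using A B by (auto simp: mat_adjoint_index scalar_prod_def sum_conjugate conjugate_dist_mul intro: sum.cong)
qed (use A B in auto)

lemma pseudo_inverse_isometry:
  assumes A: "A \<in> carrier_mat n m" and isometry: "mat_adjoint A * A = 1\<^sub>m m"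
  shows "pseudo_inverse A = mat_adjoint A"
  unfolding pseudo_inverse_def
proof (rule the_equality)
  have AH: "mat_adjoint A \<in> carrier_mat m n" using A by (rule mat_adjoint_carrier)
  show "mat_adjoint A \<in> carrier_mat (dim_col A) (dim_row A) \<and>
    A * mat_adjoint A * A = A \<and> mat_adjoint A * A * mat_adjoint A = mat_adjoint A \<and>
    mat_adjoint (A * mat_adjoint A) = A * mat_adjoint A \<and> mat_adjoint (mat_adjoint A * A) = mat_adjoint A * A"
    using A AH isometry by (simp add: assoc_mult_mat[of A n m _ n _ m] mat_adjoint_mult[OF A AH])
next
  fix X assume X: "X \<in> carrier_mat (dim_col A) (dim_row A) \<and>
    A * X * A = A \<and> X * A * X = X \<and> mat_adjoint (A * X) = A * X \<and> mat_adjoint (X * A) = X * A"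
  have AH: "mat_adjoint A \<in> carrier_mat m n" using A by (rule mat_adjoint_carrier)
  have Xc: "X \<in> carrier_mat m n" using X A by auto
  have "mat_adjoint A * A = mat_adjoint A * (A * X * A)" using X by simp
  also have "\<dots> = (mat_adjoint A * A) * (X * A)"
    using A AH Xc by (simp add: assoc_mult_mat[of _ m n _ m _ m] assoc_mult_mat[of A n m X n _ m])
  finally have XA: "X * A = 1\<^sub>m m" using isometry Xc A by simp
  have "X = mat_adjoint A * (A * X)"
    using A AH Xc isometry by (simp add: assoc_mult_mat[of _ m n _ m _ n, symmetric])
  also have "A * X = mat_adjoint X * mat_adjoint A" using X mat_adjoint_mult[OF A Xc] by simp
  also have "mat_adjoint A * (mat_adjoint X * mat_adjoint A) = mat_adjoint (X * A) * mat_adjoint A"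
    using AH mat_adjoint_carrier[OF Xc]
    by (simp add: assoc_mult_mat[of _ m n _ m _ n] mat_adjoint_mult[OF Xc A])
  finally show "X = mat_adjoint A" using XA by (simp add: left_mult_one_mat[OF AH])
qed

lemma mat_adjoint_mult_vec_index:
  assumes "j < dim_col A" "x \<in> carrier_vec (dim_row A)"
  shows "(mat_adjoint A *\<^sub>v x) $ j = (\<Sum>i<dim_row A. conjugate (A $$ (i, j)) * x $ i)"
  using assms by (simp add: scalar_prod_def mat_adjoint_index lessThan_atLeast0)

lemma distortion_isometric_scheme:
  assumes Phi: "Phi \<in> carrier_mat Lt L" and isometry: "mat_adjoint Phi * Phi = 1\<^sub>m L" and P: "P > 0"
    and w: "w \<in> carrier_vec L" and n: "n \<in> carrier_vec Lt"
  shows "distortion L w (complex_of_real (1 / sqrt P) \<cdot>\<^sub>v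
             (pseudo_inverse Phi *\<^sub>v (complex_of_real (sqrt P) \<cdot>\<^sub>v (Phi *\<^sub>v w) + n)))
           = (\<Sum>j<L. (cmod ((mat_adjoint Phi *\<^sub>v n) $ j))\<^sup>2) / (real L * P)"
proof -
  let ?A = "mat_adjoint Phi"
  have A: "?A \<in> carrier_mat L Lt" using Phi by (rule mat_adjoint_carrier)
  have "?A *\<^sub>v (Phi *\<^sub>v w) = w"
    using A Phi w isometry by (simp add: assoc_mult_mat_vec[symmetric, of _ L Lt _ L])
  then have decode: "?A *\<^sub>v (complex_of_real (sqrt P) \<cdot>\<^sub>v (Phi *\<^sub>v w) + n)
                       = complex_of_real (sqrt P) \<cdot>\<^sub>v w + ?A *\<^sub>v n"
    using A Phi w n by (simp add: mult_add_distrib_mat_vec mult_mat_vec)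
  have error: "(complex_of_real (1 / sqrt P) \<cdot>\<^sub>v (complex_of_real (sqrt P) \<cdot>\<^sub>v w + ?A *\<^sub>v n)) $ j - w $ j
                 = (?A *\<^sub>v n) $ j / complex_of_real (sqrt P)" if "j < L" for j
    using that carrier_matD[OF A] w P by (simp add: field_simps)
  have "(\<Sum>j<L. (cmod ((complex_of_real (1 / sqrt P) \<cdot>\<^sub>v (complex_of_real (sqrt P) \<cdot>\<^sub>v w + ?A *\<^sub>v n)) $ j - w $ j))\<^sup>2)
          = (\<Sum>j<L. (cmod ((?A *\<^sub>v n) $ j))\<^sup>2 / P)"
  proof (rule sum.cong[OF refl])
    fix j assume "j \<in> {..<L}"
    then have j: "j < L" by simp
    show "(cmod ((complex_of_real (1 / sqrt P) \<cdot>\<^sub>v (complex_of_real (sqrt P) \<cdot>\<^sub>v w + ?A *\<^sub>v n)) $ j - w $ j))\<^sup>2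
                 = (cmod ((?A *\<^sub>v n) $ j))\<^sup>2 / P"
      unfolding error[OF j] using P by (simp add: norm_divide power_divide)
  qed
  then show ?thesis
    unfolding distortion_def pseudo_inverse_isometry[OF Phi isometry] decode
    by (simp add: sum_divide_distrib mult.commute)
qed

lemma (in prob_space) isometry_projection_noise_tail:
  fixes Z :: "'i \<Rightarrow> 'a \<Rightarrow> complex" and \<iota> :: "nat \<Rightarrow> 'i" and v \<eta> :: real
  assumes gauss: "indep_CN_family M Z (\<iota> ` {..<Lt}) (\<lambda>_. v)" and \<iota>: "inj_on \<iota> {..<Lt}"
    and Phi: "Phi \<in> carrier_mat Lt L" and isometry: "mat_adjoint Phi * Phi = 1\<^sub>m L"
    and v: "v > 0" and \<eta>: "\<eta> > 0"
  shows "prob {\<omega> \<in> space M. (1 + \<eta>) * real L * v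
                 \<le> (\<Sum>j<L. (cmod ((mat_adjoint Phi *\<^sub>v vec Lt (\<lambda>i. Z (\<iota> i) \<omega>)) $ j))\<^sup>2)}
           \<le> exp (- (real L * (\<eta> - ln (1 + \<eta>))))"
proof -
  define \<phi> where "\<phi> j s = Phi $$ (the_inv_into {..<Lt} \<iota> s, j)" for j s
  have reindex: "(\<Sum>s\<in>\<iota> ` {..<Lt}. cnj (\<phi> j s) * f s) = (\<Sum>i<Lt. cnj (Phi $$ (i, j)) * f (\<iota> i))" for j f
    using \<iota> by (simp add: sum.reindex \<phi>_def the_inv_into_f_f)
  have orthonormal: "(\<Sum>s\<in>\<iota> ` {..<Lt}. cnj (\<phi> j s) * \<phi> l s) = (if j = l then 1 else 0)"
    if "j \<in> {..<L}" "l \<in> {..<L}" for j l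
  proof -
    have "(mat_adjoint Phi * Phi) $$ (j, l) = (\<Sum>i<Lt. cnj (Phi $$ (i, j)) * Phi $$ (i, l))"
      using that Phi by (simp add: scalar_prod_def mat_adjoint_index lessThan_atLeast0)
    then show ?thesis
      using that isometry reindex[of j "\<phi> l"] \<iota> by (simp add: \<phi>_def the_inv_into_f_f)
  qed
  have "(\<Sum>j<L. (cmod ((mat_adjoint Phi *\<^sub>v vec Lt (\<lambda>i. Z (\<iota> i) \<omega>)) $ j))\<^sup>2)
          = (\<Sum>j<L. (cmod (\<Sum>s\<in>\<iota> ` {..<Lt}. cnj (\<phi> j s) * Z s \<omega>))\<^sup>2)" for \<omega>
    using Phi by (intro sum.cong refl, subst mat_adjoint_mult_vec_index) (auto simp: reindex)
  then show ?thesis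
    using indep_CN_projection_norm_tail[OF gauss v finite_imageI[OF finite_lessThan] finite_lessThan
        orthonormal \<eta>]
    by simp
qed

lemma (in prob_space) isometric_scheme_prob_distortion_le:
  fixes Z :: "'i \<Rightarrow> 'a \<Rightarrow> complex" and \<iota> :: "nat \<Rightarrow> 'i" and w :: "'a \<Rightarrow> complex vec"
    and N0 \<eta> \<epsilon> P :: real
  assumes gauss: "indep_CN_family M Z (\<iota> ` {..<Lt}) (\<lambda>_. N0)" and \<iota>: "inj_on \<iota> {..<Lt}"
    and Phi: "Phi \<in> carrier_mat Lt L" and isometry: "mat_adjoint Phi * Phi = 1\<^sub>m L"
    and pos: "N0 > 0" "\<eta> > 0" "P > 0" "L > 0" and margin: "(1 + \<eta>) * N0 \<le> \<epsilon> * P"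
    and w: "\<And>\<omega>. w \<omega> \<in> carrier_vec L"
  shows "1 - exp (- (real L * (\<eta> - ln (1 + \<eta>))))
           \<le> prob {\<omega> \<in> space M. distortion L (w \<omega>) (complex_of_real (1 / sqrt P) \<cdot>\<^sub>v
                 (pseudo_inverse Phi *\<^sub>v (complex_of_real (sqrt P) \<cdot>\<^sub>v (Phi *\<^sub>v w \<omega>)
                    + vec Lt (\<lambda>i. Z (\<iota> i) \<omega>)))) \<le> \<epsilon>}"
proof -
  define S where "S \<omega> = (\<Sum>j<L. (cmod ((mat_adjoint Phi *\<^sub>v vec Lt (\<lambda>i. Z (\<iota> i) \<omega>)) $ j))\<^sup>2)" for \<omega>
  define B where "B = {\<omega> \<in> space M. (1 + \<eta>) * real L * N0 \<le> S \<omega>}"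
  have "S = (\<lambda>\<omega>. \<Sum>j<L. (cmod (\<Sum>i<Lt. cnj (Phi $$ (i, j)) * Z (\<iota> i) \<omega>))\<^sup>2)"
    unfolding S_def using Phi
    by (intro ext sum.cong refl, subst mat_adjoint_mult_vec_index) (auto simp: lessThan_atLeast0)
  moreover have "Z (\<iota> i) \<in> borel_measurable M" if "i < Lt" for i
    using indep_CN_family_measurable[OF gauss] that by simp
  ultimately have [measurable]: "S \<in> borel_measurable M"
    by (simp add: borel_measurable_sum borel_measurable_times)
  have distortion: "distortion L (w \<omega>) (complex_of_real (1 / sqrt P) \<cdot>\<^sub>v
                 (pseudo_inverse Phi *\<^sub>v (complex_of_real (sqrt P) \<cdot>\<^sub>v (Phi *\<^sub>v w \<omega>)
                    + vec Lt (\<lambda>i. Z (\<iota> i) \<omega>)))) = S \<omega> / (real L * P)" for \<omega>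
    unfolding S_def using w by (intro distortion_isometric_scheme[OF Phi isometry \<open>P > 0\<close>]) auto
  have small_noise: "space M - B \<subseteq> {\<omega> \<in> space M. S \<omega> / (real L * P) \<le> \<epsilon>}"
  proof safe
    fix \<omega> assume "\<omega> \<notin> B" "\<omega> \<in> space M"
    then have "S \<omega> < (1 + \<eta>) * N0 * real L"
      by (simp add: B_def mult_ac)
    also have "\<dots> \<le> \<epsilon> * (real L * P)"
      using mult_right_mono[OF margin, of "real L"] by (simp add: mult_ac)
    finally show "S \<omega> / (real L * P) \<le> \<epsilon>"
      using pos by (simp add: pos_divide_le_eq)
  qed
  have "1 - exp (- (real L * (\<eta> - ln (1 + \<eta>)))) \<le> 1 - prob B"
    unfolding B_def S_def using isometry_projection_noise_tail[OF gauss \<iota> Phi isometry pos(1,2)] by simp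
  also have "\<dots> = prob (space M - B)"
    by (rule prob_compl[symmetric]) (simp add: B_def)
  also have "\<dots> \<le> prob {\<omega> \<in> space M. S \<omega> / (real L * P) \<le> \<epsilon>}"
    by (rule finite_measure_mono[OF small_noise]) measurable
  finally show ?thesis
    unfolding distortion .
qed

lemma rate_bound_imp_distortion_margin:
  fixes R m P_W P_X N0 \<epsilon> \<eta> :: real
  assumes pos: "R > 0" "m > 0" "P_W > 0" "P_X > 0" "N0 > 0" "\<eta> > 0"
    and rate: "R \<le> \<epsilon> * (P_X / N0) * m / ((1 + \<eta>) * P_W)"
  shows "\<epsilon> \<ge> (1 + \<eta>) * (R * P_W / ((P_X / N0) * m))"
    and "(1 + \<eta>) * N0 \<le> \<epsilon> * (P_X * m / (R * P_W))"
proof -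
  have "(1 + \<eta>) * R * P_W \<le> \<epsilon> * (P_X / N0) * m"
    using rate pos by (simp add: pos_le_divide_eq mult_ac)
  then show "\<epsilon> \<ge> (1 + \<eta>) * (R * P_W / ((P_X / N0) * m))"
       and "(1 + \<eta>) * N0 \<le> \<epsilon> * (P_X * m / (R * P_W))"
    using pos by (simp_all add: field_simps)
qed

lemma exp_neg_le_of_ln_inverse_div_le:
  fixes \<delta> c x :: real
  assumes "0 < \<delta>" "0 < c" "ln (1 / \<delta>) / c \<le> x"
  shows "exp (- (x * c)) \<le> \<delta>"
proof -
  have "ln (1 / \<delta>) \<le> x * c"
    using assms(2,3) by (simp only: pos_divide_le_eq)
  then have "- (x * c) \<le> ln \<delta>"
    using assms(1) by (simp add: ln_div)
  then have "exp (- (x * c)) \<le> exp (ln \<delta>)"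
    by (simp only: exp_le_cancel_iff)
  then show ?thesis
    using assms by simp
qed

theorem theorem4:
  fixes M :: "'a measure"
    and K L Lt :: nat
    and h :: "nat \<Rightarrow> complex"
    and P_W P_X N0 \<epsilon> \<eta> \<delta> P :: real
    and Phi :: "complex mat"
    and W :: "nat \<Rightarrow> nat \<Rightarrow> 'a \<Rightarrow> complex"  \<comment> \<open>W k j = j-th entry of message w_k\<close>
    and N :: "nat \<Rightarrow> 'a \<Rightarrow> complex"           \<comment> \<open>N i = i-th entry of the noise n\<close>
  assumes M: "prob_space M"
    and K: "K \<ge> 1"
    and h: "\<forall>k<K. h k \<noteq> 0"
    and pos: "P_W > 0" "P_X > 0" "N0 > 0" "\<epsilon> > 0" "\<eta> > 0"
    and \<delta>: "0 < \<delta>" "\<delta> < 1"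
    and gauss: "indep_CN_family M
                  (\<lambda>s. case s of Inl (k, j) \<Rightarrow> W k j | Inr i \<Rightarrow> N i)
                  (({..<K} \<times> {..<L}) <+> {..<Lt})
                  (\<lambda>s. case s of Inl _ \<Rightarrow> P_W | Inr _ \<Rightarrow> N0)"
    and Lbound: "real L \<ge> ln (1 / \<delta>) / (\<eta> - ln (1 + \<eta>))"
    and Rpos: "0 < real L / real Lt"
    and Rbound: "real L / real Lt \<le> min 1
        (\<epsilon> * (P_X / N0) * Min ((\<lambda>k. (cmod (h k))\<^sup>2) ` {..<K}) / ((1 + \<eta>) * P_W))"
    and adm: "admissible_enc Phi L Lt"
    and orth: "mat_adjoint Phi * Phi = 1\<^sub>m L"
    and Popt: "P = P_X * Min ((\<lambda>k. (cmod (h k))\<^sup>2) ` {..<K}) / ((real L / real Lt) * P_W)"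
  shows "\<epsilon> \<ge> (1 + \<eta>) * ((real L / real Lt) * P_W
                 / ((P_X / N0) * Min ((\<lambda>k. (cmod (h k))\<^sup>2) ` {..<K})))
     \<and> measure M {\<omega> \<in> space M.
          (let w = vec L (\<lambda>j. \<Sum>k<K. W k j \<omega>);
               n = vec Lt (\<lambda>i. N i \<omega>);
               y = complex_of_real (sqrt P) \<cdot>\<^sub>v (Phi *\<^sub>v w) + n;
               what = complex_of_real (1 / sqrt P) \<cdot>\<^sub>v (pseudo_inverse Phi *\<^sub>v y)
           in distortion L w what \<le> \<epsilon>)} \<ge> 1 - \<delta>"
proof -
  interpret prob_space M by (rule M)
  define m where "m = Min ((\<lambda>k. (cmod (h k))\<^sup>2) ` {..<K})"
  define R where "R = real L / real Lt"
  have m: "m > 0"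
    unfolding m_def using K h by (subst Min_gr_iff) (auto simp: lessThan_empty_iff)
  have L: "L > 0" and R: "R > 0"
    using Rpos by (auto simp: R_def intro: Nat.gr0I)
  have P: "P = P_X * m / (R * P_W)"
    using Popt by (simp add: R_def m_def)
  then have "P > 0"
    using pos m R by simp
  have Phi: "Phi \<in> carrier_mat Lt L"
    using adm by (simp add: admissible_enc_def)
  have "R \<le> \<epsilon> * (P_X / N0) * m / ((1 + \<eta>) * P_W)"
    using Rbound by (simp add: R_def m_def)
  note margin = rate_bound_imp_distortion_margin[OF R m pos(1-3,5) this]
  have noise: "indep_CN_family M (\<lambda>s. case s of Inl (k, j) \<Rightarrow> W k j | Inr i \<Rightarrow> N i) (Inr ` {..<Lt}) (\<lambda>_. N0)"
    using gauss by (rule indep_CN_family_subset) auto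
  have "1 - \<delta> \<le> 1 - exp (- (real L * (\<eta> - ln (1 + \<eta>))))"
    using exp_neg_le_of_ln_inverse_div_le[OF \<delta>(1) _ Lbound] ln_add_one_self_less_self[OF pos(5)] by simp
  also have "\<dots> \<le> prob {\<omega> \<in> space M. distortion L (vec L (\<lambda>j. \<Sum>k<K. W k j \<omega>))
      (complex_of_real (1 / sqrt P) \<cdot>\<^sub>v (pseudo_inverse Phi *\<^sub>v (complex_of_real (sqrt P) \<cdot>\<^sub>v
        (Phi *\<^sub>v vec L (\<lambda>j. \<Sum>k<K. W k j \<omega>)) + vec Lt (\<lambda>i. N i \<omega>)))) \<le> \<epsilon>}"
    using isometric_scheme_prob_distortion_le[OF noise inj_Inr Phi orth pos(3,5) \<open>P > 0\<close> L
        margin(2)[folded P], of "\<lambda>\<omega>. vec L (\<lambda>j. \<Sum>k<K. W k j \<omega>)"]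
    by simp
  finally show ?thesis
    using margin(1) by (simp add: Let_def R_def m_def)
qed

end
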